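(* For $a\in(0,1)$ define $$F(a):=-\int_0^{\pi}\operatorname{Im}\bigl\{w_a(t)\bigr\}\,\frac{dt}{\sqrt{a+1/a-2\cos t}},$$ where $w_a:[0,\pi]\to\mathbb{C}$ is the continuous fourth root of $e^{3it}\,\frac{1-ae^{it}}{e^{it}-a}$ (i.e. $w_a(t)^4=e^{3it}\frac{1-ae^{it}}{e^{it}-a}$) with $w_a(0)=1$. Let $\alpha\in(0,1)$ be the unique zero of $F$ in $(0,1)$. Then $\alpha>\tfrac12$.
   Context: It is established (independently of this statement) that $F$ vanishes at exactly one point of $(0,1)$, which is denoted $\alpha$; $F(a)$ is negative for $a$ close to $0$ and $F(a)\to+\infty$ as $a\to1$. *)

theory Defs
  imports "HOL-Analysis.Analysis"
begin

definition radicand :: "real \<Rightarrow> real \<Rightarrow> complex" where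
  "radicand a t = cis (3 * t) * (1 - of_real a * cis t) / (cis t - of_real a)"

definition w :: "real \<Rightarrow> real \<Rightarrow> complex" where
  "w a = (THE v. continuous_on {0..pi} v \<and> (\<forall>t\<in>{0..pi}. v t ^ 4 = radicand a t) \<and> v 0 = 1
                 \<and> (\<forall>t. t \<notin> {0..pi} \<longrightarrow> v t = 0))"

definition F :: "real \<Rightarrow> real" where
  "F a = - integral {0..pi} (\<lambda>t. Im (w a t) / sqrt (a + 1 / a - 2 * cos t))"

end

theory Submission
  imports Defs
begin

text \<open>
  For \<open>t \<in> [0, pi]\<close> the fourth root is explicitly \<open>w a t = cis (t - \<theta> / 2)\<close>, where
  \<open>\<theta> \<in> [0, pi]\<close> is the argument of \<open>cis t - a\<close>: indeed
  \<open>cis (3t) (1 - a cis t) / (cis t - a) = cis (4t) / cis (2\<theta>)\<close>, because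
  \<open>(1 - a cis t) cis t = |cis t - a|\<^sup>2\<close>; a continuous nonvanishing fourth root is determined by
  its value at \<open>0\<close>.
  An elementary estimate shows \<open>\<theta> \<le> 2t\<close> as long as \<open>a \<le> 1/2\<close>; then \<open>Im (w a t) \<ge> 0\<close> on
  \<open>[0, pi]\<close>, with \<open>Im (w a pi) = 1\<close>, so \<open>F a < 0\<close>.  Hence no zero of \<open>F\<close> lies in \<open>(0, 1/2]\<close>.
\<close>

lemma continuous_nth_roots_eq:
  fixes f g :: "'a::topological_space \<Rightarrow> 'b::real_normed_field"
  assumes "connected S" "continuous_on S f" "continuous_on S g" "n > 0"
    and "\<And>x. x \<in> S \<Longrightarrow> f x ^ n = g x ^ n" "\<And>x. x \<in> S \<Longrightarrow> g x \<noteq> 0"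
    and "x0 \<in> S" "f x0 = g x0" "x \<in> S"
  shows "f x = g x"
proof -
  define q where "q x = f x / g x" for x
  have "continuous_on S q"
    unfolding q_def using assms(2,3,6) by (intro continuous_intros) auto
  moreover have "q ` S \<subseteq> {z. z ^ n = 1}"
    using assms(5,6) by (auto simp: q_def power_divide)
  then have "finite (q ` S)"
    using finite_roots_unity[of n] assms(4) by (auto intro: finite_subset)
  ultimately have "q constant_on S"
    using assms(1) by (intro continuous_finite_range_constant)
  then have "q x = q x0"
    using assms(7,9) by (auto simp: constant_on_def)
  then show ?thesis
    using assms(6-9) by (simp add: q_def)
qed

definition chord :: "real \<Rightarrow> real \<Rightarrow> real" where
  "chord a t = cmod (cis t - of_real a)"

definition chord_arg :: "real \<Rightarrow> real \<Rightarrow> real" where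
  "chord_arg a t = arccos ((cos t - a) / chord a t)"

lemma chord_sq: "(chord a t)\<^sup>2 = 1 + a\<^sup>2 - 2 * a * cos t"
  unfolding chord_def cmod_power2 by (simp add: power2_eq_square algebra_simps)

lemma chord_pos:
  assumes "\<bar>a\<bar> \<noteq> 1"
  shows "chord a t > 0"
proof -
  have "cis t \<noteq> of_real a"
    using assms by (metis norm_cis norm_of_real)
  then show ?thesis by (simp add: chord_def)
qed

lemma cis_mult_chord_sq:
  "cis t * of_real ((chord a t)\<^sup>2) = (cis t - of_real a) * (1 - of_real a * cis t)"
proof -
  define z where "z = cis t"
  have unit: "z * cnj z = 1"
    by (simp add: z_def cis_cnj cis_mult)
  have "z * of_real ((chord a t)\<^sup>2) = z * ((z - of_real a) * cnj (z - of_real a))"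
    unfolding chord_def z_def by (simp only: complex_norm_square)
  also have "\<dots> = (z - of_real a) * (z * cnj z - of_real a * z)"
    by (simp add: algebra_simps)
  also have "\<dots> = (z - of_real a) * (1 - of_real a * z)"
    by (simp only: unit)
  finally show ?thesis
    by (simp only: z_def)
qed

lemma chord_cos_ratio_bounds: "-1 \<le> (cos t - a) / chord a t" "(cos t - a) / chord a t \<le> 1"
proof -
  have "\<bar>Re (cis t - of_real a)\<bar> \<le> chord a t"
    unfolding chord_def by (rule abs_Re_le_cmod)
  moreover have "chord a t \<ge> 0"
    by (simp add: chord_def)
  ultimately have "\<bar>(cos t - a) / chord a t\<bar> \<le> 1"
    by (cases "chord a t = 0") (simp_all add: abs_divide divide_le_eq_1)
  then show "-1 \<le> (cos t - a) / chord a t" "(cos t - a) / chord a t \<le> 1"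
    by (simp_all only: abs_le_iff) linarith
qed

lemma chord_arg_bounds: "0 \<le> chord_arg a t" "chord_arg a t \<le> pi"
  using chord_cos_ratio_bounds[of t a] unfolding chord_arg_def
  by (auto intro!: arccos_lbound arccos_ubound)

lemma cis_chord_arg:
  assumes "\<bar>a\<bar> \<noteq> 1" "t \<in> {0..pi}"
  shows "cis (chord_arg a t) = (cis t - of_real a) / of_real (chord a t)"
proof -
  define c where "c = (cos t - a) / chord a t"
  have r: "chord a t > 0"
    using chord_pos[OF assms(1)] .
  have "1 - c\<^sup>2 = (sin t / chord a t)\<^sup>2"
    using r chord_sq[of a t] sin_squared_eq[of t]
    by (simp add: c_def field_simps power2_eq_square)
  moreover have "sin t \<ge> 0"
    using assms(2) by (simp add: sin_ge_zero)
  ultimately have "sin (chord_arg a t) = sin t / chord a t"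
    using chord_cos_ratio_bounds[of t a] r
    by (simp add: chord_arg_def sin_arccos flip: c_def)
  moreover have "cos (chord_arg a t) = c"
    using chord_cos_ratio_bounds[of t a] by (simp add: chord_arg_def c_def)
  ultimately show ?thesis
    using r by (simp add: complex_eq_iff c_def)
qed

lemma chord_0: "a \<le> 1 \<Longrightarrow> chord a 0 = 1 - a"
proof (rule power2_eq_imp_eq)
  show "(chord a 0)\<^sup>2 = (1 - a)\<^sup>2"
    unfolding chord_sq by (simp add: power2_diff)
qed (simp_all add: chord_def)

lemma chord_pi: "-1 \<le> a \<Longrightarrow> chord a pi = 1 + a"
proof (rule power2_eq_imp_eq)
  show "(chord a pi)\<^sup>2 = (1 + a)\<^sup>2"
    unfolding chord_sq by (simp add: power2_sum)
qed (simp_all add: chord_def)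

lemma chord_arg_0: "a < 1 \<Longrightarrow> chord_arg a 0 = 0"
  by (simp add: chord_arg_def chord_0)

lemma chord_arg_pi:
  assumes "-1 < a"
  shows "chord_arg a pi = pi"
proof -
  have "(cos pi - a) / chord a pi = -1"
    using assms by (simp add: chord_pi field_simps)
  then show ?thesis
    by (simp add: chord_arg_def)
qed

definition w_explicit :: "real \<Rightarrow> real \<Rightarrow> complex" where
  "w_explicit a t = (if t \<in> {0..pi} then cis (t - chord_arg a t / 2) else 0)"

lemma w_explicit_power_4:
  assumes "\<bar>a\<bar> \<noteq> 1" "t \<in> {0..pi}"
  shows "w_explicit a t ^ 4 = radicand a t"
proof -
  define z where "z = cis t"
  have nz: "z - of_real a \<noteq> 0"
    using chord_pos[OF assms(1), of t] by (simp add: z_def chord_def)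
  have four: "cis (4 * t) = cis (3 * t) * z"
    by (simp add: z_def cis_mult)
  have "w_explicit a t ^ 4 = cis (t - chord_arg a t / 2) ^ 4"
    using assms(2) by (simp add: w_explicit_def)
  also have "\<dots> = cis (4 * t - 2 * chord_arg a t)"
    unfolding Complex.DeMoivre by (rule arg_cong[where f = cis]) (simp add: algebra_simps)
  also have "\<dots> = cis (4 * t) / cis (chord_arg a t) ^ 2"
    by (simp add: Complex.DeMoivre cis_divide)
  also have "\<dots> = cis (3 * t) * z / ((z - of_real a) / of_real (chord a t)) ^ 2"
    by (simp only: four cis_chord_arg[OF assms, folded z_def])
  also have "\<dots> = cis (3 * t) * (z * of_real ((chord a t)\<^sup>2)) / (z - of_real a)\<^sup>2"
    using chord_pos[OF assms(1), of t] nz by (simp add: field_simps)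
  also have "\<dots> = cis (3 * t) * ((z - of_real a) * (1 - of_real a * z)) / (z - of_real a)\<^sup>2"
    by (simp only: z_def cis_mult_chord_sq)
  also have "\<dots> = radicand a t"
    using nz by (simp add: z_def radicand_def power2_eq_square)
  finally show ?thesis .
qed

lemma continuous_on_w_explicit:
  assumes "\<bar>a\<bar> \<noteq> 1"
  shows "continuous_on {0..pi} (w_explicit a)"
proof -
  have "continuous_on {0..pi} (\<lambda>t. cis (t - chord_arg a t / 2))"
    unfolding chord_arg_def chord_def
    using chord_cos_ratio_bounds chord_pos[OF assms]
    by (intro continuous_intros) (auto simp: chord_def)
  then show ?thesis
    by (rule continuous_on_eq) (simp add: w_explicit_def)
qed

lemma w_eq_w_explicit:
  assumes "0 \<le> a" "a < 1"
  shows "w a = w_explicit a"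
proof -
  have a: "\<bar>a\<bar> \<noteq> 1"
    using assms by simp
  have w_0: "w_explicit a 0 = 1"
    using assms by (simp add: w_explicit_def chord_arg_0)
  show ?thesis
    unfolding w_def
  proof (rule the_equality)
    show "continuous_on {0..pi} (w_explicit a) \<and> (\<forall>t\<in>{0..pi}. w_explicit a t ^ 4 = radicand a t)
        \<and> w_explicit a 0 = 1 \<and> (\<forall>t. t \<notin> {0..pi} \<longrightarrow> w_explicit a t = 0)"
      using w_explicit_power_4[OF a]
      by (intro conjI ballI allI impI continuous_on_w_explicit[OF a] w_0)
         (simp_all add: w_explicit_def)
  next
    fix v assume v: "continuous_on {0..pi} v \<and> (\<forall>t\<in>{0..pi}. v t ^ 4 = radicand a t) \<and> v 0 = 1
        \<and> (\<forall>t. t \<notin> {0..pi} \<longrightarrow> v t = 0)"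
    have "v t = w_explicit a t" for t
    proof (cases "t \<in> {0..pi}")
      case True
      show ?thesis
      proof (rule continuous_nth_roots_eq[of "{0..pi}" _ _ 4 0])
        show "v x ^ 4 = w_explicit a x ^ 4" if "x \<in> {0..pi}" for x
          using v that w_explicit_power_4[OF a that] by simp
        show "w_explicit a x \<noteq> 0" if "x \<in> {0..pi}" for x
          using that by (simp add: w_explicit_def)
      qed (use v True w_0 continuous_on_w_explicit[OF a] in auto)
    next
      case False
      then show ?thesis
        using v by (simp add: w_explicit_def)
    qed
    then show "v = w_explicit a" ..
  qed
qed

text \<open>From \<open>1 + a\<^sup>2 - 2ac = (5/4 - c) + (a - 1/2)(a + 1/2 - 2c)\<close>: compare with the extreme case \<open>a = 1/2\<close>.\<close>

lemma four_sq_mult_chord_sq_decomp: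
  fixes a c :: real
  shows "4 * c\<^sup>2 * (1 + a\<^sup>2 - 2 * a * c) - 1
      = 4 * c\<^sup>2 * ((a - 1/2) * (a + 1/2 - 2 * c)) + (1 - c) * (4 * c\<^sup>2 - c - 1)"
  by (simp add: algebra_simps power2_eq_square power3_eq_cube)

lemma four_sq_mult_chord_sq_ge_1:
  fixes a c :: real
  assumes "2 * c\<^sup>2 > 1" "1/2 < c" "c \<le> 1" "a \<le> 1/2"
  shows "4 * c\<^sup>2 * (1 + a\<^sup>2 - 2 * a * c) \<ge> 1"
proof -
  have "(a - 1/2) * (a + 1/2 - 2 * c) \<ge> 0"
    using assms by (intro mult_nonpos_nonpos) auto
  then have "4 * c\<^sup>2 * ((a - 1/2) * (a + 1/2 - 2 * c)) \<ge> 0"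
    by simp
  moreover have "(1 - c) * (4 * c\<^sup>2 - c - 1) \<ge> 0"
    using assms by (intro mult_nonneg_nonneg) auto
  ultimately show ?thesis
    using four_sq_mult_chord_sq_decomp[of c a] by linarith
qed

lemma four_sq_mult_chord_sq_le_1:
  fixes a c :: real
  assumes "0 < c" "c < a" "a \<le> 1/2"
  shows "4 * c\<^sup>2 * (1 + a\<^sup>2 - 2 * a * c) \<le> 1"
proof -
  have "c\<^sup>2 \<le> c / 2"
    using assms by (simp add: power2_eq_square mult_left_le)
  have "(a - 1/2) * (a + 1/2 - 2 * c) \<le> 0"
    using assms by (intro mult_nonpos_nonneg) auto
  then have "4 * c\<^sup>2 * ((a - 1/2) * (a + 1/2 - 2 * c)) \<le> 0"
    by (simp add: mult_nonneg_nonpos)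
  moreover have "(1 - c) * (4 * c\<^sup>2 - c - 1) \<le> 0"
    using assms \<open>c\<^sup>2 \<le> c / 2\<close> by (intro mult_nonneg_nonpos) auto
  ultimately show ?thesis
    using four_sq_mult_chord_sq_decomp[of c a] by linarith
qed

lemma double_cos_mult_chord_le:
  fixes a c r :: real
  assumes c: "0 < c" "c \<le> 1" and a: "0 < a" "a \<le> 1/2"
    and r: "0 \<le> r" "r\<^sup>2 = 1 + a\<^sup>2 - 2 * a * c"
  shows "(2 * c\<^sup>2 - 1) * r \<le> c - a"
proof -
  have "((2 * c\<^sup>2 - 1) * r)\<^sup>2 = (2 * c\<^sup>2 - 1)\<^sup>2 * (1 + a\<^sup>2 - 2 * a * c)"
    by (simp add: power_mult_distrib r(2))
  then have diff: "(c - a)\<^sup>2 - ((2 * c\<^sup>2 - 1) * r)\<^sup>2 = (1 - c\<^sup>2) * (4 * c\<^sup>2 * (1 + a\<^sup>2 - 2 * a * c) - 1)"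
    by (simp add: algebra_simps power2_eq_square)
  have "0 \<le> 1 - c\<^sup>2"
    using c by (simp add: abs_square_le_1)
  consider "2 * c\<^sup>2 > 1" | "2 * c\<^sup>2 \<le> 1" "a \<le> c" | "2 * c\<^sup>2 \<le> 1" "c < a"
    by linarith
  then show ?thesis
  proof cases
    case 1
    have "1/2 < c"
    proof (rule ccontr)
      assume "\<not> 1/2 < c"
      then have "c\<^sup>2 \<le> (1/2)\<^sup>2" using c by (intro power_mono) auto
      then show False using 1 by (simp add: power2_eq_square)
    qed
    then have "(1 - c\<^sup>2) * (4 * c\<^sup>2 * (1 + a\<^sup>2 - 2 * a * c) - 1) \<ge> 0"
      using \<open>0 \<le> 1 - c\<^sup>2\<close> four_sq_mult_chord_sq_ge_1[OF 1 _ c(2) a(2)]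
      by (intro mult_nonneg_nonneg) auto
    then have "((2 * c\<^sup>2 - 1) * r)\<^sup>2 \<le> (c - a)\<^sup>2"
      using diff by linarith
    moreover have "0 \<le> c - a"
      using \<open>1/2 < c\<close> a by linarith
    ultimately show ?thesis
      by (rule power2_le_imp_le)
  next
    case 2
    then show ?thesis
      using r(1) mult_nonpos_nonneg[of "2 * c\<^sup>2 - 1" r] by linarith
  next
    case 3
    have "(1 - c\<^sup>2) * (4 * c\<^sup>2 * (1 + a\<^sup>2 - 2 * a * c) - 1) \<le> 0"
      using \<open>0 \<le> 1 - c\<^sup>2\<close> four_sq_mult_chord_sq_le_1[OF c(1) 3(2) a(2)]
      by (intro mult_nonneg_nonpos) auto
    then have "(c - a)\<^sup>2 \<le> ((2 * c\<^sup>2 - 1) * r)\<^sup>2"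
      using diff by linarith
    then have "(a - c)\<^sup>2 \<le> ((1 - 2 * c\<^sup>2) * r)\<^sup>2"
      by (simp add: power2_commute power_mult_distrib)
    moreover have "0 \<le> (1 - 2 * c\<^sup>2) * r"
      using 3 r(1) by simp
    ultimately have "a - c \<le> (1 - 2 * c\<^sup>2) * r"
      by (rule power2_le_imp_le)
    then show ?thesis
      by (simp add: algebra_simps)
  qed
qed

lemma chord_arg_le_double:
  assumes "0 < a" "a \<le> 1/2" "t \<in> {0..pi}"
  shows "chord_arg a t \<le> 2 * t"
proof (cases "pi/2 \<le> t")
  case True
  then show ?thesis using chord_arg_bounds(2)[of a t] by linarith
next
  case False
  have r: "chord a t > 0"
    using chord_pos[of a t] assms by simp
  have "cos t > 0"
    using False assms(3) by (intro cos_gt_zero_pi) auto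
  then have "(2 * (cos t)\<^sup>2 - 1) * chord a t \<le> cos t - a"
    using assms r chord_sq[of a t] by (intro double_cos_mult_chord_le) auto
  then have "cos (2 * t) \<le> (cos t - a) / chord a t"
    using r by (simp add: cos_double_cos pos_le_divide_eq)
  then have "chord_arg a t \<le> arccos (cos (2 * t))"
    unfolding chord_arg_def using chord_cos_ratio_bounds[of t a]
    by (intro arccos_le_arccos) auto
  also have "\<dots> = 2 * t"
    using False assms(3) by (intro arccos_cos) auto
  finally show ?thesis .
qed

lemma Im_w_explicit_nonneg:
  assumes "0 < a" "a \<le> 1/2" "t \<in> {0..pi}"
  shows "Im (w_explicit a t) \<ge> 0"
proof -
  have "0 \<le> t - chord_arg a t / 2" "t - chord_arg a t / 2 \<le> pi"
    using chord_arg_le_double[OF assms] chord_arg_bounds(1)[of a t] assms(3) by auto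
  then show ?thesis
    using assms(3) by (simp add: w_explicit_def sin_ge_zero)
qed

lemma Im_w_explicit_pi: "-1 < a \<Longrightarrow> Im (w_explicit a pi) = 1"
  by (simp add: w_explicit_def chord_arg_pi)

lemma F_neg:
  assumes "0 < a" "a \<le> 1/2"
  shows "F a < 0"
proof -
  define f where "f t = Im (w a t) / sqrt (a + 1 / a - 2 * cos t)" for t
  have den: "a + 1 / a - 2 * cos t > 0" for t
  proof -
    have "a + 1 / a - 2 * cos t = (chord a t)\<^sup>2 / a"
      unfolding chord_sq using assms by (simp add: field_simps power2_eq_square)
    then show ?thesis
      using chord_pos[of a t] assms by simp
  qed
  have w: "w a = w_explicit a"
    using assms by (intro w_eq_w_explicit) auto
  have cont: "continuous_on {0..pi} f"
    unfolding f_def w using continuous_on_w_explicit[of a] assms den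
    by (intro continuous_intros) (auto dest: less_imp_neq[symmetric])
  have nonneg: "f t \<ge> 0" if "t \<in> {0..pi}" for t
    unfolding f_def w using Im_w_explicit_nonneg[OF assms that] den[of t] by simp
  have "f pi > 0"
    unfolding f_def w using Im_w_explicit_pi[of a] assms den[of pi] by simp
  then have "integral {0..pi} f \<noteq> 0"
    using integral_eq_0_iff[OF cont pi_gt_zero] nonneg by force
  moreover have "integral {0..pi} f \<ge> 0"
    using nonneg integrable_continuous_interval[OF cont] by (intro integral_nonneg) auto
  moreover have "F a = - integral {0..pi} f"
    unfolding F_def f_def by (rule refl)
  ultimately show ?thesis
    by linarith
qed

theorem lemma5p1:
  fixes \<alpha> :: real
  assumes "\<alpha> \<in> {0<..<1}"
    and "F \<alpha> = 0"
    and "\<forall>a\<in>{0<..<1}. F a = 0 \<longrightarrow> a = \<alpha>"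
  shows "\<alpha> > 1/2"
proof (rule ccontr)
  assume "\<not> \<alpha> > 1/2"
  then have "F \<alpha> < 0"
    using assms(1) by (intro F_neg) auto
  with assms(2) show False
    by simp
qed

end
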